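(* Let $D^k$ be a vertically mapped wedge with $J^k>0$. Let $E$ be an edge of $\widehat T$ with affine parametrization $\gamma:[0,1]\to E$, and let $f=\bm\Phi^k(E\times[0,1])$ be the corresponding quadrilateral face, parametrized by $\bm X(u,t)=\bm\Phi^k(\gamma(u),t)$, $(u,t)\in[0,1]^2$, with surface Jacobian $J^k_f(u,t)=|\partial_u\bm X\times\partial_t\bm X|$. Then $f$ is planar with constant unit normal, and $J^k_f$ is independent of $t$ and affine in $u$. Moreover the face mass matrix $(\bm M^k_f)_{ij,i'j'}=\int_0^1\!\int_0^1\ell_{ij}(\bm X(u,t))\ell_{i'j'}(\bm X(u,t))J^k_f\,du\,dt$ (with $\ell_{ij}$ evaluated at reference coordinates $(\gamma(u),t)$) satisfies $$\bm M^k_f=\widetilde{\bm M}^{\mathrm{tri},k}_{\mathrm{edge}}\otimes\widehat{\bm M}^{\mathrm{1D}},\qquad (\widetilde{\bm M}^{\mathrm{tri},k}_{\mathrm{edge}})_{ii'}=\int_0^1\ell^{\mathrm{tri}}_i(\gamma(u))\ell^{\mathrm{tri}}_{i'}(\gamma(u))J^k_f(u)\,du,$$ and consequently the lift matrix is $$\bm L^k_f:=(\bm M^k)^{-1}\bm M^k_f=\big((\bm M^{\mathrm{tri},k})^{-1}\widetilde{\bm M}^{\mathrm{tri},k}_{\mathrm{edge}}\big)\otimes\bm I_{N+1},$$ which is block diagonal with respect to the index $j$ (i.e. $(\bm L^k_f)_{ij,i'j'}=0$ whenever $j\neq j'$).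
   Context: Reference wedge $\widehat W=\widehat T\times[0,1]$ with $\widehat T=\{(r,s):r,s\ge0,\ r+s\le1\}$. Vertex functions $v_1=(1-r-s)(1-t)$, $v_2=r(1-t)$, $v_3=s(1-t)$, $v_4=(1-r-s)t$, $v_5=rt$, $v_6=st$; a wedge $D^k$ is the image of $\widehat W$ under $\bm{\Phi}^k=\sum_{i=1}^6\bm{\nu}_iv_i$ with vertices $\bm{\nu}_i\in\mathbb{R}^3$, and $J^k=\det[\partial_r\bm{\Phi}^k,\partial_s\bm{\Phi}^k,\partial_t\bm{\Phi}^k]$. It is vertically mapped if the pairs $(\bm{\nu}_1,\bm{\nu}_4)$, $(\bm{\nu}_2,\bm{\nu}_5)$, $(\bm{\nu}_3,\bm{\nu}_6)$ each have identical $x$- and $y$-coordinates. Nodal basis: fix $N\ge1$, points $(r_i,s_i)$, $i=1,\dots,(N+1)(N+2)/2$, in $\widehat T$ unisolvent for polynomials of total degree $\le N$ with Lagrange basis $\ell^{\mathrm{tri}}_i$, and Gauss–Legendre–Lobatto points $0=t_0<\dots<t_N=1$ with Lagrange basis $\ell^{\mathrm{1D}}_j$; $\ell_{ij}=\ell^{\mathrm{tri}}_i(r,s)\ell^{\mathrm{1D}}_j(t)$. Matrices indexed by $(i,j)$ are ordered with $i$ the slow index, so $(\bm A\otimes\bm B)_{ij,i'j'}=\bm A_{ii'}\bm B_{jj'}$. Definitions: $(\bm M^k)_{ij,i'j'}=\int_{\widehat W}\ell_{ij}\ell_{i'j'}J^k$; $(\bm M^{\mathrm{tri},k})_{ii'}=\int_{\widehat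 T}\ell^{\mathrm{tri}}_i\ell^{\mathrm{tri}}_{i'}J^k(r,s)$ (where $J^k$ is independent of $t$ for vertically mapped wedges); $(\widehat{\bm M}^{\mathrm{1D}})_{jj'}=\int_0^1\ell^{\mathrm{1D}}_j\ell^{\mathrm{1D}}_{j'}$; $\bm I_{N+1}$ is the $(N+1)\times(N+1)$ identity. *)

theory Defs
  imports "HOL-Analysis.Analysis" "HOL-Computational_Algebra.Polynomial"
    "Jordan_Normal_Form.Gauss_Jordan_Elimination"
begin

definition refT :: "(real \<times> real) set" where
  "refT = {(r, s). r \<ge> 0 \<and> s \<ge> 0 \<and> r + s \<le> 1}"

definition refW :: "((real \<times> real) \<times> real) set" where
  "refW = refT \<times> {0..1}"

definition refT_vertices :: "(real \<times> real) set" where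
  "refT_vertices = {(0, 0), (1, 0), (0, 1)}"

definition vfun :: "nat \<Rightarrow> real \<Rightarrow> real \<Rightarrow> real \<Rightarrow> real" where
  "vfun i r s t =
     (if i = 1 then (1 - r - s) * (1 - t)
      else if i = 2 then r * (1 - t)
      else if i = 3 then s * (1 - t)
      else if i = 4 then (1 - r - s) * t
      else if i = 5 then r * t
      else if i = 6 then s * t else 0)"

definition Phi :: "(nat \<Rightarrow> real^3) \<Rightarrow> real \<Rightarrow> real \<Rightarrow> real \<Rightarrow> real^3" where
  "Phi nu r s t = (\<Sum>i\<in>{1..6}. vfun i r s t *\<^sub>R nu i)"

definition dPhi_r :: "(nat \<Rightarrow> real^3) \<Rightarrow> real \<Rightarrow> real \<Rightarrow> real \<Rightarrow> real^3" where
  "dPhi_r nu r s t = vector_derivative (\<lambda>x. Phi nu x s t) (at r)"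

definition dPhi_s :: "(nat \<Rightarrow> real^3) \<Rightarrow> real \<Rightarrow> real \<Rightarrow> real \<Rightarrow> real^3" where
  "dPhi_s nu r s t = vector_derivative (\<lambda>x. Phi nu r x t) (at s)"

definition dPhi_t :: "(nat \<Rightarrow> real^3) \<Rightarrow> real \<Rightarrow> real \<Rightarrow> real \<Rightarrow> real^3" where
  "dPhi_t nu r s t = vector_derivative (\<lambda>x. Phi nu r s x) (at t)"

definition Jac :: "(nat \<Rightarrow> real^3) \<Rightarrow> real \<Rightarrow> real \<Rightarrow> real \<Rightarrow> real" where
  "Jac nu r s t = Determinants.det (\<chi> i j::3.
      if j = 1 then dPhi_r nu r s t $ i
      else if j = 2 then dPhi_s nu r s t $ i
      else dPhi_t nu r s t $ i)"

definition vertically_mapped :: "(nat \<Rightarrow> real^3) \<Rightarrow> bool" where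
  "vertically_mapped nu \<longleftrightarrow>
     (nu 1 $ 1 = nu 4 $ 1 \<and> nu 1 $ 2 = nu 4 $ 2) \<and>
     (nu 2 $ 1 = nu 5 $ 1 \<and> nu 2 $ 2 = nu 5 $ 2) \<and>
     (nu 3 $ 1 = nu 6 $ 1 \<and> nu 3 $ 2 = nu 6 $ 2)"

definition edge_param :: "real \<times> real \<Rightarrow> real \<times> real \<Rightarrow> real \<Rightarrow> real \<times> real" where
  "edge_param a b u = (1 - u) *\<^sub>R a + u *\<^sub>R b"

definition faceX :: "(nat \<Rightarrow> real^3) \<Rightarrow> (real \<Rightarrow> real \<times> real) \<Rightarrow> real \<Rightarrow> real \<Rightarrow> real^3" where
  "faceX nu \<gamma> u t = Phi nu (fst (\<gamma> u)) (snd (\<gamma> u)) t"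

definition dX_u :: "(nat \<Rightarrow> real^3) \<Rightarrow> (real \<Rightarrow> real \<times> real) \<Rightarrow> real \<Rightarrow> real \<Rightarrow> real^3" where
  "dX_u nu \<gamma> u t = vector_derivative (\<lambda>x. faceX nu \<gamma> x t) (at u)"

definition dX_t :: "(nat \<Rightarrow> real^3) \<Rightarrow> (real \<Rightarrow> real \<times> real) \<Rightarrow> real \<Rightarrow> real \<Rightarrow> real^3" where
  "dX_t nu \<gamma> u t = vector_derivative (\<lambda>x. faceX nu \<gamma> u x) (at t)"

definition Jface :: "(nat \<Rightarrow> real^3) \<Rightarrow> (real \<Rightarrow> real \<times> real) \<Rightarrow> real \<Rightarrow> real \<Rightarrow> real" where
  "Jface nu \<gamma> u t = norm (cross3 (dX_u nu \<gamma> u t) (dX_t nu \<gamma> u t))"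

definition poly2_deg :: "nat \<Rightarrow> (real \<Rightarrow> real \<Rightarrow> real) \<Rightarrow> bool" where
  "poly2_deg N p \<longleftrightarrow> (\<exists>c :: nat \<Rightarrow> nat \<Rightarrow> real.
      \<forall>r s. p r s = (\<Sum>a\<le>N. \<Sum>b\<le>N - a. c a b * r ^ a * s ^ b))"

definition unisolvent :: "nat \<Rightarrow> nat \<Rightarrow> (nat \<Rightarrow> real \<times> real) \<Rightarrow> bool" where
  "unisolvent N K pts \<longleftrightarrow> (\<forall>p. poly2_deg N p \<and> (\<forall>i<K. p (fst (pts i)) (snd (pts i)) = 0)
      \<longrightarrow> (\<forall>r s. p r s = 0))"

definition lagrange_tri :: "nat \<Rightarrow> nat \<Rightarrow> (nat \<Rightarrow> real \<times> real) \<Rightarrow> (nat \<Rightarrow> real \<Rightarrow> real \<Rightarrow> real) \<Rightarrow> bool" where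
  "lagrange_tri N K pts ltri \<longleftrightarrow> (\<forall>i<K. poly2_deg N (ltri i) \<and>
      (\<forall>i'<K. ltri i (fst (pts i')) (snd (pts i')) = (if i = i' then 1 else 0)))"

text \<open>Shifted Legendre polynomial on [0,1]:
  P_n(2x-1) = sum_k (-1)^(n+k) C(n,k) C(n+k,k) x^k\<close>
definition shifted_legendre :: "nat \<Rightarrow> real poly" where
  "shifted_legendre n = (\<Sum>k\<le>n. monom ((-1) ^ (n + k) * real (n choose k) * real ((n + k) choose k)) k)"

definition gll_points :: "nat \<Rightarrow> (nat \<Rightarrow> real) \<Rightarrow> bool" where
  "gll_points N tp \<longleftrightarrow> tp 0 = 0 \<and> tp N = 1 \<and> strict_mono_on {0..N} tp \<and>
      (\<forall>j\<in>{1..<N}. poly (pderiv (shifted_legendre N)) (tp j) = 0)"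

definition lagrange1D :: "nat \<Rightarrow> (nat \<Rightarrow> real) \<Rightarrow> nat \<Rightarrow> real \<Rightarrow> real" where
  "lagrange1D N tp j t = (\<Prod>m\<in>{0..N} - {j}. (t - tp m) / (tp j - tp m))"

definition lwedge :: "nat \<Rightarrow> (nat \<Rightarrow> real) \<Rightarrow> (nat \<Rightarrow> real \<Rightarrow> real \<Rightarrow> real)
    \<Rightarrow> nat \<Rightarrow> nat \<Rightarrow> real \<Rightarrow> real \<Rightarrow> real \<Rightarrow> real" where
  "lwedge N tp ltri i j r s t = ltri i r s * lagrange1D N tp j t"

section \<open>Matrices (index (i,j) encoded as i*(N+1)+j, i the slow index)\<close>

definition kron :: "real mat \<Rightarrow> real mat \<Rightarrow> real mat" where
  "kron A B = mat (dim_row A * dim_row B) (dim_col A * dim_col B)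
     (\<lambda>(p, q). A $$ (p div dim_row B, q div dim_col B) * B $$ (p mod dim_row B, q mod dim_col B))"

definition mass_wedge :: "(nat \<Rightarrow> real^3) \<Rightarrow> nat \<Rightarrow> nat \<Rightarrow> (nat \<Rightarrow> real) \<Rightarrow> (nat \<Rightarrow> real \<Rightarrow> real \<Rightarrow> real) \<Rightarrow> real mat" where
  "mass_wedge nu N K tp ltri = mat (K * (N + 1)) (K * (N + 1)) (\<lambda>(p, q).
     integral refW (\<lambda>((r, s), t).
        lwedge N tp ltri (p div (N + 1)) (p mod (N + 1)) r s t *
        lwedge N tp ltri (q div (N + 1)) (q mod (N + 1)) r s t * Jac nu r s t))"

text \<open>M^{tri,k}; for a vertically mapped wedge J^k does not depend on t, we evaluate at t = 0\<close>
definition mass_tri :: "(nat \<Rightarrow> real^3) \<Rightarrow> nat \<Rightarrow> (nat \<Rightarrow> real \<Rightarrow> real \<Rightarrow> real) \<Rightarrow> real mat" where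
  "mass_tri nu K ltri = mat K K (\<lambda>(i, i').
     integral refT (\<lambda>(r, s). ltri i r s * ltri i' r s * Jac nu r s 0))"

definition mass_1D :: "nat \<Rightarrow> (nat \<Rightarrow> real) \<Rightarrow> real mat" where
  "mass_1D N tp = mat (N + 1) (N + 1) (\<lambda>(j, j').
     integral {0..1} (\<lambda>t. lagrange1D N tp j t * lagrange1D N tp j' t))"

definition mass_face :: "(nat \<Rightarrow> real^3) \<Rightarrow> (real \<Rightarrow> real \<times> real) \<Rightarrow> nat \<Rightarrow> nat \<Rightarrow> (nat \<Rightarrow> real)
    \<Rightarrow> (nat \<Rightarrow> real \<Rightarrow> real \<Rightarrow> real) \<Rightarrow> real mat" where
  "mass_face nu \<gamma> N K tp ltri = mat (K * (N + 1)) (K * (N + 1)) (\<lambda>(p, q).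
     integral {0..1} (\<lambda>t. integral {0..1} (\<lambda>u.
        lwedge N tp ltri (p div (N + 1)) (p mod (N + 1)) (fst (\<gamma> u)) (snd (\<gamma> u)) t *
        lwedge N tp ltri (q div (N + 1)) (q mod (N + 1)) (fst (\<gamma> u)) (snd (\<gamma> u)) t *
        Jface nu \<gamma> u t)))"

text \<open>Edge matrix; J_f^k is independent of t, we evaluate at t = 0\<close>
definition mass_edge :: "(nat \<Rightarrow> real^3) \<Rightarrow> (real \<Rightarrow> real \<times> real) \<Rightarrow> nat \<Rightarrow> (nat \<Rightarrow> real \<Rightarrow> real \<Rightarrow> real) \<Rightarrow> real mat" where
  "mass_edge nu \<gamma> K ltri = mat K K (\<lambda>(i, i').
     integral {0..1} (\<lambda>u. ltri i (fst (\<gamma> u)) (snd (\<gamma> u)) * ltri i' (fst (\<gamma> u)) (snd (\<gamma> u)) *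
        Jface nu \<gamma> u 0))"

end

theory Submission
  imports Defs "Jordan_Normal_Form.Determinant"
begin

text \<open>For a vertically mapped wedge, \<open>\<partial>\<^sub>r\<Phi>\<close> and \<open>\<partial>\<^sub>s\<Phi>\<close> have constant horizontal parts
  and \<open>\<partial>\<^sub>t\<Phi>\<close> is vertical, so the Jacobian factors as a vertical extent \<open>h(r,s)\<close>, affine in
  \<open>(r,s)\<close>, times the constant Jacobian of the projected base triangle. On a side face the
  cross product \<open>\<partial>\<^sub>uX \<times> \<partial>\<^sub>tX\<close> is \<open>h(\<gamma>(u))\<close> times a fixed horizontal vector normal to the
  projected edge: the face is a vertical plane and \<open>J\<^sub>f = |h(\<gamma>(u))| \<cdot> |edge|\<close> is affine in \<open>u\<close>.
  Since no weight depends on \<open>t\<close>, Fubini separates the wedge and face mass matrices into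
  Kronecker products whose second factor is the 1D mass matrix; the weighted Gram matrices
  of the nodal bases are invertible, and \<open>(A \<otimes> B)\<^sup>-\<^sup>1 (C \<otimes> B) = A\<^sup>-\<^sup>1C \<otimes> I\<close>.\<close>

lemma integrable_continuous_compact:
  fixes f :: "'a::euclidean_space \<Rightarrow> real"
  assumes "compact S" "continuous_on S f"
  shows "f integrable_on S"
  using set_borel_integral_eq_integral(1)[of S f] borel_integrable_compact[OF assms]
  unfolding set_integrable_def by auto

lemma integral_Times_separable:
  fixes F :: "'a::euclidean_space \<Rightarrow> real" and G :: "'b::euclidean_space \<Rightarrow> real"
  assumes A: "compact A" and B: "compact B" and cF: "continuous_on A F" and cG: "continuous_on B G"
  shows "integral (A \<times> B) (\<lambda>(x,y). F x * G y) = integral A F * integral B G"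
proof -
  have cAB: "continuous_on (A \<times> B) (\<lambda>(x,y). F x * G y)"
    unfolding case_prod_unfold
    by (intro continuous_on_mult continuous_on_compose2[OF cF] continuous_on_compose2[OF cG]
        continuous_on_fst continuous_on_snd continuous_on_id) auto
  have iA: "integrable lborel (\<lambda>x. indicator A x *\<^sub>R F x)" by (rule borel_integrable_compact[OF A cF])
  have iB: "integrable lborel (\<lambda>x. indicator B x *\<^sub>R G x)" by (rule borel_integrable_compact[OF B cG])
  have iAB: "integrable lborel (\<lambda>z. indicator (A \<times> B) z *\<^sub>R (\<lambda>(x,y). F x * G y) z)"
    by (rule borel_integrable_compact[OF compact_Times[OF A B] cAB])
  have eA: "integral A F = (\<integral>x. indicator A x *\<^sub>R F x \<partial>lborel)"
    using set_borel_integral_eq_integral(2)[of A F] iA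
    unfolding set_integrable_def set_lebesgue_integral_def by simp
  have eB: "integral B G = (\<integral>x. indicator B x *\<^sub>R G x \<partial>lborel)"
    using set_borel_integral_eq_integral(2)[of B G] iB
    unfolding set_integrable_def set_lebesgue_integral_def by simp
  have eAB: "integral (A \<times> B) (\<lambda>(x,y). F x * G y)
      = (\<integral>z. indicator (A \<times> B) z *\<^sub>R (\<lambda>(x,y). F x * G y) z \<partial>lborel)"
    using set_borel_integral_eq_integral(2)[of "A \<times> B" "\<lambda>(x,y). F x * G y"] iAB
    unfolding set_integrable_def set_lebesgue_integral_def by simp
  have iAB': "integrable (lborel \<Otimes>\<^sub>M lborel) (\<lambda>z. indicator (A \<times> B) z *\<^sub>R (\<lambda>(x,y). F x * G y) z)"
    using iAB by (simp only: lborel_prod)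
  have "(\<integral>z. indicator (A \<times> B) z *\<^sub>R (\<lambda>(x,y). F x * G y) z \<partial>lborel)
      = (\<integral>x. (\<integral>y. indicator (A \<times> B) (x,y) *\<^sub>R (\<lambda>(x,y). F x * G y) (x,y) \<partial>lborel) \<partial>lborel)"
    using lborel_pair.integral_fst'[OF iAB'] by (simp only: lborel_prod)
  also have "\<dots> = (\<integral>x. (indicator A x *\<^sub>R F x) * (\<integral>y. indicator B y *\<^sub>R G y \<partial>lborel) \<partial>lborel)"
  proof (rule Bochner_Integration.integral_cong[OF refl])
    fix x
    have "(\<integral>y. indicator (A \<times> B) (x,y) *\<^sub>R (\<lambda>(x,y). F x * G y) (x,y) \<partial>lborel)
       = (\<integral>y. (indicator A x * F x) * (indicator B y *\<^sub>R G y) \<partial>lborel)"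
      by (rule Bochner_Integration.integral_cong[OF refl]) (simp add: indicator_times mult_ac)
    then show "(\<integral>y. indicator (A \<times> B) (x,y) *\<^sub>R (\<lambda>(x,y). F x * G y) (x,y) \<partial>lborel)
       = (indicator A x *\<^sub>R F x) * (\<integral>y. indicator B y *\<^sub>R G y \<partial>lborel)"
      by simp
  qed
  also have "\<dots> = (\<integral>x. indicator A x *\<^sub>R F x \<partial>lborel) * (\<integral>y. indicator B y *\<^sub>R G y \<partial>lborel)"
    by (rule integral_mult_left_zero)
  finally show ?thesis using eA eB eAB by simp
qed

lemma integral_pos_convex_body:
  fixes f :: "'a::euclidean_space \<Rightarrow> real"
  assumes S: "compact S" "convex S" "interior S \<noteq> {}"
    and cf: "continuous_on S f" and nn: "\<And>x. x \<in> S \<Longrightarrow> f x \<ge> 0"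
    and x0: "x0 \<in> S" and pos: "f x0 > 0"
  shows "integral S f > 0"
proof -
  have cl: "closure (interior S) = S"
    using convex_closure_interior[OF S(2,3)] closure_closed[OF compact_imp_closed[OF S(1)]] by simp
  have "\<exists>x1 \<in> interior S. f x1 > 0"
  proof (rule ccontr)
    assume "\<not> ?thesis"
    then have "\<forall>x\<in>interior S. f x \<le> 0" by auto
    moreover have "continuous_on (closure (interior S)) f" using cf cl by simp
    moreover have "x0 \<in> closure (interior S)" using x0 cl by simp
    ultimately have "f x0 \<le> 0"
      by (intro continuous_le_on_closure[of "interior S" f x0 0]) auto
    with pos show False by simp
  qed
  then obtain x1 where x1: "x1 \<in> interior S" "f x1 > 0" by auto
  have "open (interior S \<inter> f -` {0<..})"
    using continuous_open_preimage[OF continuous_on_subset[OF cf interior_subset]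
        open_interior open_greaterThan]
    by (simp add: Int_commute)
  moreover have "x1 \<in> interior S \<inter> f -` {0<..}" using x1 by auto
  ultimately obtain a b where ab: "cbox a b \<subseteq> interior S \<inter> f -` {0<..}" "x1 \<in> box a b"
    by (meson open_contains_cbox)
  have cS: "cbox a b \<subseteq> S" using ab(1) interior_subset by blast
  have cfb: "continuous_on (cbox a b) f" using cf cS continuous_on_subset by blast
  have fpos: "\<And>x. x \<in> cbox a b \<Longrightarrow> f x > 0" using ab(1) by auto
  have ib: "f integrable_on cbox a b" using integrable_continuous[OF cfb] .
  have x1c: "x1 \<in> cbox a b" using ab(2) box_subset_cbox[of a b] by blast
  have "integral (cbox a b) f \<noteq> 0"
  proof
    assume "integral (cbox a b) f = 0"
    then have int0: "(f has_integral 0) (cbox a b)" using ib by (metis has_integral_integral)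
    have "f x1 = 0"
      by (rule has_integral_0_cbox_imp_0[OF cfb _ int0 _ x1c])
         (use fpos box_subset_cbox[of a b] ab(2) in \<open>auto intro: less_imp_le\<close>)
    with x1 show False by simp
  qed
  moreover have "integral (cbox a b) f \<ge> 0"
    by (rule integral_nonneg[OF ib]) (simp add: fpos less_imp_le)
  moreover have "integral (cbox a b) f \<le> integral S f"
    by (rule integral_subset_le[OF cS ib integrable_continuous_compact[OF S(1) cf]]) (simp add: nn)
  ultimately show ?thesis by linarith
qed

text \<open>A weighted Gram matrix of functions that are nodal at points of a convex body is
  positive definite: \<open>v\<^sup>T M v = \<integral> (\<Sum>\<^sub>i v\<^sub>i \<phi>\<^sub>i)\<^sup>2 w\<close> and the polynomial \<open>\<Sum>\<^sub>i v\<^sub>i \<phi>\<^sub>i\<close> takes the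
  value \<open>v\<^sub>i\<close> at the \<open>i\<close>-th node.\<close>
lemma det_weighted_gram_nonzero:
  fixes S :: "'a::euclidean_space set" and phi :: "nat \<Rightarrow> 'a \<Rightarrow> real" and w :: "'a \<Rightarrow> real"
    and x :: "nat \<Rightarrow> 'a"
  assumes S: "compact S" "convex S" "interior S \<noteq> {}"
    and cphi: "\<And>i. i < n \<Longrightarrow> continuous_on S (phi i)"
    and cw: "continuous_on S w" and wpos: "\<And>y. y \<in> S \<Longrightarrow> w y > 0"
    and xS: "\<And>i. i < n \<Longrightarrow> x i \<in> S"
    and nodal: "\<And>i j. i < n \<Longrightarrow> j < n \<Longrightarrow> phi i (x j) = (if i = j then 1 else 0)"
  shows "det (mat n n (\<lambda>(i,j). integral S (\<lambda>y. phi i y * phi j y * w y))) \<noteq> 0"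
proof
  let ?M = "mat n n (\<lambda>(i,j). integral S (\<lambda>y. phi i y * phi j y * w y))"
  assume "det ?M = 0"
  then obtain v where v: "v \<in> carrier_vec n" "v \<noteq> 0\<^sub>v n" "?M *\<^sub>v v = 0\<^sub>v n"
    using det_0_iff_vec_prod_zero_field[of ?M n] by auto
  obtain i0 where i0: "i0 < n" "v $ i0 \<noteq> 0"
    using v(1,2) by (metis carrier_vecD eq_vecI index_zero_vec(1,2))
  define P where "P y = (\<Sum>i<n. v $ i * phi i y)" for y
  have int: "\<And>i j. i < n \<Longrightarrow> j < n \<Longrightarrow> (\<lambda>y. v$i * v$j * (phi i y * phi j y * w y)) integrable_on S"
    by (intro integrable_continuous_compact S continuous_intros cphi cw)
  have "v \<bullet> (?M *\<^sub>v v) = (\<Sum>i<n. v $ i * (\<Sum>j<n. integral S (\<lambda>y. phi i y * phi j y * w y) * v $ j))"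
    using v(1) by (simp add: scalar_prod_def lessThan_atLeast0 row_def)
  also have "\<dots> = (\<Sum>i<n. \<Sum>j<n. (v$i * v$j) * integral S (\<lambda>y. phi i y * phi j y * w y))"
    by (simp add: sum_distrib_left mult_ac)
  also have "\<dots> = (\<Sum>i<n. \<Sum>j<n. integral S (\<lambda>y. v$i * v$j * (phi i y * phi j y * w y)))"
    by (simp only: integral_mult_right)
  also have "\<dots> = (\<Sum>i<n. integral S (\<lambda>y. \<Sum>j<n. v$i * v$j * (phi i y * phi j y * w y)))"
    by (intro sum.cong refl integral_sum[symmetric]) (auto intro: int)
  also have "\<dots> = integral S (\<lambda>y. \<Sum>i<n. \<Sum>j<n. v$i * v$j * (phi i y * phi j y * w y))"
    by (intro integral_sum[symmetric]) (auto intro!: integrable_sum int)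
  also have "\<dots> = integral S (\<lambda>y. (P y)^2 * w y)"
  proof (intro integral_cong)
    fix y
    have "(P y)^2 * w y = (\<Sum>i<n. \<Sum>j<n. (v $ i * phi i y) * (v $ j * phi j y)) * w y"
      unfolding P_def power2_eq_square sum_product ..
    also have "\<dots> = (\<Sum>i<n. \<Sum>j<n. v$i * v$j * (phi i y * phi j y * w y))"
      by (simp add: sum_distrib_right sum_distrib_left mult_ac)
    finally show "(\<Sum>i<n. \<Sum>j<n. v$i * v$j * (phi i y * phi j y * w y)) = (P y)^2 * w y" by simp
  qed
  finally have eq: "v \<bullet> (?M *\<^sub>v v) = integral S (\<lambda>y. (P y)^2 * w y)" .
  have "P (x i0) = (\<Sum>i<n. if i = i0 then v $ i else 0)"
    unfolding P_def using nodal i0(1) by (intro sum.cong refl) auto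
  also have "\<dots> = v $ i0" using i0(1) by (simp add: sum.delta)
  finally have "(P (x i0))^2 * w (x i0) > 0" using i0(2) wpos[OF xS[OF i0(1)]] by simp
  moreover have "continuous_on S (\<lambda>y. (P y)^2 * w y)"
    unfolding P_def by (intro continuous_intros cphi cw) auto
  ultimately have "integral S (\<lambda>y. (P y)^2 * w y) > 0"
    using wpos by (intro integral_pos_convex_body[OF S _ _ xS[OF i0(1)]]) (auto simp: less_imp_le)
  moreover have "v \<bullet> (?M *\<^sub>v v) = 0" using v(1,3) by simp
  ultimately show False using eq by simp
qed

section \<open>Kronecker products of matrices\<close>

lemma sum_lessThan_mult_div_mod:
  assumes l: "(l::nat) > 0"
  shows "(\<Sum>z<k*l. f (z div l) (z mod l)) = (\<Sum>x<k. \<Sum>y<l. f x y)"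
proof -
  have "(\<Sum>z<k*l. f (z div l) (z mod l)) = (\<Sum>(x,y)\<in>{..<k}\<times>{..<l}. f x y)"
  proof (rule sum.reindex_bij_witness[where i = "\<lambda>(x,y). x*l+y" and j = "\<lambda>z. (z div l, z mod l)"])
    fix z assume z: "z \<in> {..<k*l}"
    show "(\<lambda>(x, y). x * l + y) (z div l, z mod l) = z" by simp
    have "z div l < k" using z l by (simp add: less_mult_imp_div_less)
    then show "(z div l, z mod l) \<in> {..<k} \<times> {..<l}" using l by simp
    show "(case (z div l, z mod l) of (x, y) \<Rightarrow> f x y) = f (z div l) (z mod l)" by simp
  next
    fix w assume w: "w \<in> {..<k} \<times> {..<l}"
    obtain x y where xy: "w = (x,y)" by (cases w)
    with w have x: "x < k" and y: "y < l" by auto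
    show "(case (case w of (x, y) \<Rightarrow> x * l + y) of z \<Rightarrow> (z div l, z mod l)) = w"
      using xy y by simp
    have "x * l + y < (x+1) * l" using y by simp
    also have "\<dots> \<le> k * l" using x by (intro mult_right_mono) auto
    finally show "(case w of (x, y) \<Rightarrow> x * l + y) \<in> {..<k * l}" using xy by simp
  qed
  also have "\<dots> = (\<Sum>x<k. \<Sum>y<l. f x y)" by (rule sum.cartesian_product[symmetric])
  finally show ?thesis .
qed

lemma kron_carrier: "kron A B \<in> carrier_mat (dim_row A * dim_row B) (dim_col A * dim_col B)"
  unfolding kron_def by simp

lemma kron_mult:
  fixes A B C D :: "real mat"
  assumes A: "A \<in> carrier_mat m k" and B: "B \<in> carrier_mat n l"
    and C: "C \<in> carrier_mat k m2" and D: "D \<in> carrier_mat l n2"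
    and pos: "n > 0" "l > 0" "n2 > 0"
  shows "kron A B * kron C D = kron (A * C) (B * D)"
proof (rule eq_matI)
  show "dim_row (kron A B * kron C D) = dim_row (kron (A * C) (B * D))"
    "dim_col (kron A B * kron C D) = dim_col (kron (A * C) (B * D))"
    using A B C D by (simp_all add: kron_def)
  fix p q assume "p < dim_row (kron (A * C) (B * D))" and "q < dim_col (kron (A * C) (B * D))"
  then have p: "p < m * n" and q: "q < m2 * n2" using A B C D by (simp_all add: kron_def)
  have pd: "p div n < m" "p mod n < n" using p pos by (simp_all add: less_mult_imp_div_less mult.commute)
  have qd: "q div n2 < m2" "q mod n2 < n2" using q pos by (simp_all add: less_mult_imp_div_less mult.commute)
  have "(kron A B * kron C D) $$ (p,q) = (\<Sum>z<k*l. A $$ (p div n, z div l) * B $$ (p mod n, z mod l)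
        * (C $$ (z div l, q div n2) * D $$ (z mod l, q mod n2)))"
    using A B C D p q by (simp add: kron_def scalar_prod_def lessThan_atLeast0)
  also have "\<dots> = (\<Sum>x<k. \<Sum>y<l. A $$ (p div n, x) * B $$ (p mod n, y)
        * (C $$ (x, q div n2) * D $$ (y, q mod n2)))"
    by (rule sum_lessThan_mult_div_mod[OF pos(2), where f = "\<lambda>x y. A $$ (p div n, x) * B $$ (p mod n, y)
        * (C $$ (x, q div n2) * D $$ (y, q mod n2))"])
  also have "\<dots> = (\<Sum>x<k. A $$ (p div n, x) * C $$ (x, q div n2))
      * (\<Sum>y<l. B $$ (p mod n, y) * D $$ (y, q mod n2))"
    by (simp add: sum_product mult_ac sum.swap[of _ "{..<l}"])
  also have "\<dots> = kron (A * C) (B * D) $$ (p, q)"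
    using A B C D p q pd qd by (simp add: kron_def scalar_prod_def lessThan_atLeast0)
  finally show "(kron A B * kron C D) $$ (p,q) = kron (A * C) (B * D) $$ (p, q)" .
qed

lemma kron_one:
  assumes "n > 0"
  shows "kron (1\<^sub>m m) (1\<^sub>m n) = (1\<^sub>m (m*n) :: real mat)"
proof (rule eq_matI)
  fix p q assume "p < dim_row (1\<^sub>m (m*n) :: real mat)" "q < dim_col (1\<^sub>m (m*n) :: real mat)"
  then have p: "p < m*n" and q: "q < m*n" by auto
  have pd: "p div n < m" "p mod n < n" using p assms by (simp_all add: less_mult_imp_div_less mult.commute)
  have qd: "q div n < m" "q mod n < n" using q assms by (simp_all add: less_mult_imp_div_less mult.commute)
  have "(p div n = q div n \<and> p mod n = q mod n) \<longleftrightarrow> p = q"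
    by (metis div_mult_mod_eq)
  then show "kron (1\<^sub>m m) (1\<^sub>m n) $$ (p, q) = (1\<^sub>m (m*n) :: real mat) $$ (p, q)"
    using p q pd qd by (auto simp: kron_def)
qed (auto simp: kron_def)

lemma kron_one_right_off_block:
  assumes "p < dim_row A * n" "q < dim_col A * n" "p mod n \<noteq> q mod n"
  shows "kron A (1\<^sub>m n) $$ (p, q) = 0"
proof -
  have "n > 0" using assms(1) by (cases n) auto
  then show ?thesis using assms by (simp add: kron_def)
qed

lemma mat_inverse_exists_if_det_nonzero:
  assumes A: "A \<in> carrier_mat n n" and d: "det A \<noteq> (0::real)"
  obtains B where "mat_inverse A = Some B"
proof (cases "mat_inverse A")
  case None
  from mat_inverse(1)[OF A None, of "()"] det_non_zero_imp_unit[OF A d, of "()"] show ?thesis by simp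
qed

lemma mat_inverse_kron:
  fixes A B :: "real mat"
  assumes A: "A \<in> carrier_mat m m" and B: "B \<in> carrier_mat n n" and n: "n > 0"
    and Ai: "mat_inverse A = Some A'" and Bi: "mat_inverse B = Some B'"
  shows "mat_inverse (kron A B) = Some (kron A' B')"
proof -
  from mat_inverse(2)[OF A Ai] have A': "A * A' = 1\<^sub>m m" "A' * A = 1\<^sub>m m" "A' \<in> carrier_mat m m" by auto
  from mat_inverse(2)[OF B Bi] have B': "B * B' = 1\<^sub>m n" "B' * B = 1\<^sub>m n" "B' \<in> carrier_mat n n" by auto
  let ?X = "kron A' B'"
  have W: "kron A B \<in> carrier_mat (m*n) (m*n)" using kron_carrier[of A B] A B by simp
  have X: "?X \<in> carrier_mat (m*n) (m*n)" using kron_carrier[of A' B'] A'(3) B'(3) by simp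
  have XW: "?X * kron A B = 1\<^sub>m (m*n)"
    by (simp add: kron_mult[OF A'(3) B'(3) A B n n n] A'(2) B'(2) kron_one[OF n])
  have WX: "kron A B * ?X = 1\<^sub>m (m*n)"
    by (simp add: kron_mult[OF A B A'(3) B'(3) n n n] A'(1) B'(1) kron_one[OF n])
  have "kron A B \<in> Units (ring_mat TYPE(real) (m*n) ())"
    unfolding Units_def ring_mat_def using W X XW WX by auto
  then obtain M where M: "mat_inverse (kron A B) = Some M"
    using mat_inverse(1)[OF W, of "()"] by fastforce
  from mat_inverse(2)[OF W M] have "M * kron A B = 1\<^sub>m (m*n)" "M \<in> carrier_mat (m*n) (m*n)" by auto
  then have "M = ?X" using W X WX
    by (metis assoc_mult_mat left_mult_one_mat right_mult_one_mat)
  with M show ?thesis by simp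
qed

lemma refT_halfspaces:
  "refT = {x. (-1,0) \<bullet> x \<le> (0::real)} \<inter> {x. (0,-1) \<bullet> x \<le> (0::real)} \<inter> {x. (1,1) \<bullet> x \<le> (1::real)}"
  unfolding refT_def by (auto simp: inner_prod_def)

lemma convex_refT: "convex refT"
  unfolding refT_halfspaces by (intro convex_Int convex_halfspace_le)

lemma compact_refT: "compact refT"
proof -
  have "refT = refT \<inter> ({0..1} \<times> {0..1})" unfolding refT_def by auto
  moreover have "compact (refT \<inter> ({0..1::real} \<times> {0..1::real}))"
    unfolding refT_halfspaces by (intro closed_Int_compact closed_Int closed_halfspace_le compact_Times compact_Icc)
  ultimately show ?thesis by simp
qed

lemma interior_refT_nonempty: "interior refT \<noteq> {}"
proof -
  let ?O = "{x::real\<times>real. 0 < fst x} \<inter> {x. 0 < snd x} \<inter> {x. fst x + snd x < 1}"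
  have "open ?O" by (intro open_Int open_Collect_less continuous_intros)
  moreover have "?O \<subseteq> refT" unfolding refT_def by auto
  ultimately have "?O \<subseteq> interior refT" by (rule interior_maximal[rotated])
  moreover have "(1/4, 1/4) \<in> ?O" by simp
  ultimately show ?thesis by blast
qed

lemma edge_param_in_refT:
  assumes "a \<in> refT_vertices" "b \<in> refT_vertices" "u \<in> {0..1}"
  shows "(fst (edge_param a b u), snd (edge_param a b u)) \<in> refT"
  using assms unfolding refT_vertices_def refT_def edge_param_def by auto

lemma fst_edge_param: "fst (edge_param a b u) = fst a + u * (fst b - fst a)"
  by (simp add: edge_param_def algebra_simps)

lemma snd_edge_param: "snd (edge_param a b u) = snd a + u * (snd b - snd a)"
  by (simp add: edge_param_def algebra_simps)

lemma continuous_on_poly2_deg: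
  assumes "poly2_deg N p"
  shows "continuous_on S (\<lambda>y. p (fst y) (snd y))"
proof -
  from assms obtain c where c: "\<And>r s. p r s = (\<Sum>a\<le>N. \<Sum>b\<le>N - a. c a b * r ^ a * s ^ b)"
    unfolding poly2_deg_def by blast
  show ?thesis unfolding c by (intro continuous_intros)
qed

lemma continuous_on_lagrange1D: "continuous_on S (lagrange1D N tp j)"
  unfolding lagrange1D_def divide_inverse by (intro continuous_intros)

lemma gll_points_in_unit_interval:
  assumes "gll_points N tp" "j \<le> N"
  shows "tp j \<in> {0..1}"
proof -
  have mono: "\<And>j k. j \<le> N \<Longrightarrow> k \<le> N \<Longrightarrow> j < k \<Longrightarrow> tp j < tp k"
    using assms(1) unfolding gll_points_def strict_mono_on_def by auto
  have "tp 0 \<le> tp j" "tp j \<le> tp N"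
    using mono[of 0 j] mono[of j N] assms(2) by (cases "j = 0"; cases "j = N"; auto)+
  then show ?thesis using assms(1) unfolding gll_points_def by simp
qed

lemma lagrange1D_nodal:
  assumes "gll_points N tp" "j \<le> N" "j' \<le> N"
  shows "lagrange1D N tp j (tp j') = (if j = j' then 1 else 0)"
proof -
  have inj: "tp k \<noteq> tp k'" if "k \<le> N" "k' \<le> N" "k \<noteq> k'" for k k'
    using assms(1) that unfolding gll_points_def strict_mono_on_def
    by (metis atLeastAtMost_iff le0 less_irrefl nat_neq_iff)
  show ?thesis
  proof (cases "j = j'")
    case True
    then have "lagrange1D N tp j (tp j') = (\<Prod>m\<in>{0..N} - {j}. 1)"
      unfolding lagrange1D_def using inj assms(3) by (intro prod.cong refl) auto
    then show ?thesis using True by simp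
  next
    case False
    then have "j' \<in> {0..N} - {j}" using assms(3) by auto
    then have "lagrange1D N tp j (tp j') = 0"
      unfolding lagrange1D_def by (intro prod_zero) auto
    then show ?thesis using False by simp
  qed
qed

section \<open>Geometry of a vertically mapped wedge\<close>

lemma Phi_bilinear:
  "Phi nu r s t = nu 1 + r *\<^sub>R (nu 2 - nu 1) + s *\<^sub>R (nu 3 - nu 1) + t *\<^sub>R (nu 4 - nu 1)
     + (r*t) *\<^sub>R (nu 1 - nu 2 - nu 4 + nu 5) + (s*t) *\<^sub>R (nu 1 - nu 3 - nu 4 + nu 6)"
proof -
  have "{1..6::nat} = {1,2,3,4,5,6}" by auto
  then show ?thesis unfolding Phi_def
    by (simp add: vfun_def Finite_Cartesian_Product.vec_eq_iff algebra_simps)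
qed

lemma vector_derivative_affine: "vector_derivative (\<lambda>x. P + x *\<^sub>R (Q::real^3)) (at y) = Q"
  by (rule vector_derivative_at) (auto intro!: derivative_eq_intros)

lemma dPhi_r_eq: "dPhi_r nu r s t = (nu 2 - nu 1) + t *\<^sub>R (nu 1 - nu 2 - nu 4 + nu 5)"
proof -
  have "(\<lambda>x. Phi nu x s t) = (\<lambda>x. (nu 1 + s *\<^sub>R (nu 3 - nu 1) + t *\<^sub>R (nu 4 - nu 1) + (s*t) *\<^sub>R (nu 1 - nu 3 - nu 4 + nu 6))
      + x *\<^sub>R ((nu 2 - nu 1) + t *\<^sub>R (nu 1 - nu 2 - nu 4 + nu 5)))"
    by (rule ext) (simp add: Phi_bilinear Finite_Cartesian_Product.vec_eq_iff algebra_simps)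
  then show ?thesis unfolding dPhi_r_def by (simp add: vector_derivative_affine)
qed

lemma dPhi_s_eq: "dPhi_s nu r s t = (nu 3 - nu 1) + t *\<^sub>R (nu 1 - nu 3 - nu 4 + nu 6)"
proof -
  have "(\<lambda>x. Phi nu r x t) = (\<lambda>x. (nu 1 + r *\<^sub>R (nu 2 - nu 1) + t *\<^sub>R (nu 4 - nu 1) + (r*t) *\<^sub>R (nu 1 - nu 2 - nu 4 + nu 5))
      + x *\<^sub>R ((nu 3 - nu 1) + t *\<^sub>R (nu 1 - nu 3 - nu 4 + nu 6)))"
    by (rule ext) (simp add: Phi_bilinear Finite_Cartesian_Product.vec_eq_iff algebra_simps)
  then show ?thesis unfolding dPhi_s_def by (simp add: vector_derivative_affine)
qed

lemma dPhi_t_eq: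
  "dPhi_t nu r s t = (nu 4 - nu 1) + r *\<^sub>R (nu 1 - nu 2 - nu 4 + nu 5) + s *\<^sub>R (nu 1 - nu 3 - nu 4 + nu 6)"
proof -
  have "(\<lambda>x. Phi nu r s x) = (\<lambda>x. (nu 1 + r *\<^sub>R (nu 2 - nu 1) + s *\<^sub>R (nu 3 - nu 1))
      + x *\<^sub>R ((nu 4 - nu 1) + r *\<^sub>R (nu 1 - nu 2 - nu 4 + nu 5) + s *\<^sub>R (nu 1 - nu 3 - nu 4 + nu 6)))"
    by (rule ext) (simp add: Phi_bilinear Finite_Cartesian_Product.vec_eq_iff algebra_simps)
  then show ?thesis unfolding dPhi_t_def by (simp add: vector_derivative_affine)
qed

text \<open>For a vertically mapped wedge \<open>\<partial>\<^sub>t\<Phi>(r,s) = (0, 0, vertical_extent nu r s)\<close>.\<close>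
definition vertical_extent :: "(nat \<Rightarrow> real^3) \<Rightarrow> real \<Rightarrow> real \<Rightarrow> real" where
  "vertical_extent nu r s =
     (nu 4 - nu 1)$3 + r * (nu 1 - nu 2 - nu 4 + nu 5)$3 + s * (nu 1 - nu 3 - nu 4 + nu 6)$3"

definition base_det :: "(nat \<Rightarrow> real^3) \<Rightarrow> real" where
  "base_det nu = (nu 2 - nu 1)$1 * (nu 3 - nu 1)$2 - (nu 2 - nu 1)$2 * (nu 3 - nu 1)$1"

lemma Jac_vertically_mapped:
  assumes "vertically_mapped nu"
  shows "Jac nu r s t = vertical_extent nu r s * base_det nu"
  using assms unfolding Jac_def dPhi_r_eq dPhi_s_eq dPhi_t_eq vertical_extent_def base_det_def
    vertically_mapped_def
  by (simp add: det_3 algebra_simps)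

lemma vertical_extent_edge_param:
  "vertical_extent nu (fst (edge_param a b u)) (snd (edge_param a b u))
   = vertical_extent nu (fst a) (snd a)
     + u * (vertical_extent nu (fst b) (snd b) - vertical_extent nu (fst a) (snd a))"
  unfolding fst_edge_param snd_edge_param vertical_extent_def by (simp add: algebra_simps)

section \<open>Geometry of a side face\<close>

text \<open>\<open>(edge_dx, edge_dy)\<close> is the horizontal part of \<open>\<partial>\<^sub>uX\<close>, the same at every point of the face.\<close>
definition edge_dx :: "(nat \<Rightarrow> real^3) \<Rightarrow> real \<times> real \<Rightarrow> real \<times> real \<Rightarrow> real" where
  "edge_dx nu a b = (fst b - fst a) * (nu 2 - nu 1)$1 + (snd b - snd a) * (nu 3 - nu 1)$1"

definition edge_dy :: "(nat \<Rightarrow> real^3) \<Rightarrow> real \<times> real \<Rightarrow> real \<times> real \<Rightarrow> real" where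
  "edge_dy nu a b = (fst b - fst a) * (nu 2 - nu 1)$2 + (snd b - snd a) * (nu 3 - nu 1)$2"

definition edge_length :: "(nat \<Rightarrow> real^3) \<Rightarrow> real \<times> real \<Rightarrow> real \<times> real \<Rightarrow> real" where
  "edge_length nu a b = sqrt ((edge_dx nu a b)^2 + (edge_dy nu a b)^2)"

lemma dX_t_eq: "dX_t nu \<gamma> u t = dPhi_t nu (fst (\<gamma> u)) (snd (\<gamma> u)) t"
  unfolding dX_t_def dPhi_t_def faceX_def ..

lemma dX_u_edge_param:
  "dX_u nu (edge_param a b) u t =
     (fst b - fst a) *\<^sub>R ((nu 2 - nu 1) + t *\<^sub>R (nu 1 - nu 2 - nu 4 + nu 5))
   + (snd b - snd a) *\<^sub>R ((nu 3 - nu 1) + t *\<^sub>R (nu 1 - nu 3 - nu 4 + nu 6))"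
proof -
  have "(\<lambda>x. faceX nu (edge_param a b) x t) = (\<lambda>x. Phi nu (fst a) (snd a) t + x *\<^sub>R (
       (fst b - fst a) *\<^sub>R ((nu 2 - nu 1) + t *\<^sub>R (nu 1 - nu 2 - nu 4 + nu 5))
     + (snd b - snd a) *\<^sub>R ((nu 3 - nu 1) + t *\<^sub>R (nu 1 - nu 3 - nu 4 + nu 6))))"
    by (rule ext) (simp add: faceX_def fst_edge_param snd_edge_param Phi_bilinear
        Finite_Cartesian_Product.vec_eq_iff algebra_simps)
  then show ?thesis unfolding dX_u_def by (simp add: vector_derivative_affine)
qed

lemma cross3_dX_edge_param:
  assumes v: "vertically_mapped nu"
  shows "cross3 (dX_u nu (edge_param a b) u t) (dX_t nu (edge_param a b) u t)
    = vertical_extent nu (fst (edge_param a b u)) (snd (edge_param a b u))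
        *\<^sub>R vector [edge_dy nu a b, - edge_dx nu a b, 0]"
proof -
  let ?x = "dX_u nu (edge_param a b) u t" and ?y = "dX_t nu (edge_param a b) u t"
  have "?x$1 = edge_dx nu a b" "?x$2 = edge_dy nu a b" "?y$1 = 0" "?y$2 = 0"
    "?y$3 = vertical_extent nu (fst (edge_param a b u)) (snd (edge_param a b u))"
    using v unfolding dX_u_edge_param dX_t_eq dPhi_t_eq edge_dx_def edge_dy_def vertical_extent_def
      vertically_mapped_def
    by (simp_all add: algebra_simps)
  then show ?thesis
    unfolding cross3_def by (simp add: Finite_Cartesian_Product.vec_eq_iff forall_3)
qed

lemma norm_real3: "norm (v::real^3) = sqrt ((v$1)^2 + (v$2)^2 + (v$3)^2)"
  by (simp add: norm_eq_sqrt_inner inner_vec_def sum_3 power2_eq_square)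

lemma Jface_edge_param:
  assumes "vertically_mapped nu"
  shows "Jface nu (edge_param a b) u t
    = \<bar>vertical_extent nu (fst (edge_param a b u)) (snd (edge_param a b u))\<bar> * edge_length nu a b"
proof -
  let ?h = "vertical_extent nu (fst (edge_param a b u)) (snd (edge_param a b u))"
  have "Jface nu (edge_param a b) u t = sqrt (?h^2 * ((edge_dx nu a b)^2 + (edge_dy nu a b)^2))"
    unfolding Jface_def cross3_dX_edge_param[OF assms] norm_real3
    by (simp add: algebra_simps power_mult_distrib)
  then show ?thesis by (simp add: real_sqrt_mult edge_length_def)
qed

lemma faceX_horizontal:
  assumes "vertically_mapped nu"
  shows "faceX nu (edge_param a b) u t $ 1 = faceX nu (edge_param a b) 0 0 $ 1 + u * edge_dx nu a b"
    and "faceX nu (edge_param a b) u t $ 2 = faceX nu (edge_param a b) 0 0 $ 2 + u * edge_dy nu a b"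
  using assms unfolding faceX_def Phi_bilinear fst_edge_param snd_edge_param edge_dx_def edge_dy_def
    vertically_mapped_def
  by (simp_all add: algebra_simps)

lemma edge_dx_dy_nonzero:
  assumes "base_det nu \<noteq> 0" "a \<noteq> b"
  shows "edge_dx nu a b \<noteq> 0 \<or> edge_dy nu a b \<noteq> 0"
proof -
  have "(fst b - fst a) * base_det nu = edge_dx nu a b * (nu 3 - nu 1)$2 - edge_dy nu a b * (nu 3 - nu 1)$1"
    "(snd b - snd a) * base_det nu = edge_dy nu a b * (nu 2 - nu 1)$1 - edge_dx nu a b * (nu 2 - nu 1)$2"
    unfolding edge_dx_def edge_dy_def base_det_def by (simp_all add: algebra_simps)
  then show ?thesis using assms by (auto simp: prod_eq_iff)
qed

lemma sgn_base_det_vertical_extent_pos: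
  assumes v: "vertically_mapped nu" and Jpos: "\<And>r s. (r, s) \<in> refT \<Longrightarrow> Jac nu r s 0 > 0"
    and a: "a \<in> refT_vertices" and b: "b \<in> refT_vertices" and u: "u \<in> {0..1}"
  shows "sgn (base_det nu) * vertical_extent nu (fst (edge_param a b u)) (snd (edge_param a b u)) > 0"
  using Jpos[OF edge_param_in_refT[OF a b u]]
  unfolding Jac_vertically_mapped[OF v] by (auto simp: sgn_if zero_less_mult_iff)

lemma Jface_edge_param_signed:
  assumes v: "vertically_mapped nu" and Jpos: "\<And>r s. (r, s) \<in> refT \<Longrightarrow> Jac nu r s 0 > 0"
    and a: "a \<in> refT_vertices" and b: "b \<in> refT_vertices" and u: "u \<in> {0..1}"
  shows "Jface nu (edge_param a b) u t = sgn (base_det nu)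
      * vertical_extent nu (fst (edge_param a b u)) (snd (edge_param a b u)) * edge_length nu a b"
proof -
  let ?\<sigma> = "sgn (base_det nu)" and ?h = "vertical_extent nu (fst (edge_param a b u)) (snd (edge_param a b u))"
  have "?\<sigma> * ?h > 0" by (rule sgn_base_det_vertical_extent_pos[OF v Jpos a b u])
  then have "\<bar>?h\<bar> = ?\<sigma> * ?h" by (auto simp: sgn_if abs_if)
  then show ?thesis unfolding Jface_edge_param[OF v] by simp
qed

lemma face_planar:
  assumes v: "vertically_mapped nu" and Jpos: "\<And>r s. (r, s) \<in> refT \<Longrightarrow> Jac nu r s 0 > 0"
    and a: "a \<in> refT_vertices" and b: "b \<in> refT_vertices" and ab: "a \<noteq> b"
  shows "\<exists>n :: real^3. \<exists>c. norm n = 1 \<and>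
        (\<forall>u\<in>{0..1}. \<forall>t\<in>{0..1}. n \<bullet> faceX nu (edge_param a b) u t = c \<and>
           Jface nu (edge_param a b) u t > 0 \<and>
           (1 / Jface nu (edge_param a b) u t) *\<^sub>R
              cross3 (dX_u nu (edge_param a b) u t) (dX_t nu (edge_param a b) u t) = n)"
proof -
  define \<sigma> where "\<sigma> = sgn (base_det nu)"
  define L where "L = edge_length nu a b"
  define w :: "real^3" where "w = vector [edge_dy nu a b, - edge_dx nu a b, 0]"
  define n where "n = (\<sigma> / L) *\<^sub>R w"
  let ?h = "\<lambda>u. vertical_extent nu (fst (edge_param a b u)) (snd (edge_param a b u))"
  have "\<sigma> * ?h 0 > 0"
    using sgn_base_det_vertical_extent_pos[OF v Jpos a b, of 0] unfolding \<sigma>_def by simp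
  then have D: "base_det nu \<noteq> 0" unfolding \<sigma>_def by auto
  then have \<sigma>: "\<sigma> = 1 \<or> \<sigma> = -1" unfolding \<sigma>_def by (auto simp: sgn_if)
  have L: "L > 0"
    using edge_dx_dy_nonzero[OF D ab] unfolding L_def edge_length_def by (simp add: sum_power2_gt_zero_iff)
  have "norm w = L" unfolding w_def L_def edge_length_def norm_real3 by (simp add: add.commute)
  then have "norm n = 1" unfolding n_def using \<sigma> L by auto
  moreover have "n \<bullet> faceX nu (edge_param a b) u t = n \<bullet> faceX nu (edge_param a b) 0 0
      \<and> Jface nu (edge_param a b) u t > 0
      \<and> (1 / Jface nu (edge_param a b) u t) *\<^sub>R
          cross3 (dX_u nu (edge_param a b) u t) (dX_t nu (edge_param a b) u t) = n"
    if u: "u \<in> {0..1}" for u t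
  proof (intro conjI)
    show "n \<bullet> faceX nu (edge_param a b) u t = n \<bullet> faceX nu (edge_param a b) 0 0"
      unfolding n_def w_def inner_vec_def sum_3 faceX_horizontal[OF v, of a b u t]
      by (simp add: algebra_simps)
    have J: "Jface nu (edge_param a b) u t = \<sigma> * ?h u * L"
      unfolding \<sigma>_def L_def by (rule Jface_edge_param_signed[OF v Jpos a b u])
    have "\<sigma> * ?h u > 0" unfolding \<sigma>_def by (rule sgn_base_det_vertical_extent_pos[OF v Jpos a b u])
    then show "Jface nu (edge_param a b) u t > 0" unfolding J using L by simp
    have "?h u / (\<sigma> * ?h u * L) = \<sigma> / L"
      using \<open>\<sigma> * ?h u > 0\<close> \<sigma> L by auto
    then show "(1 / Jface nu (edge_param a b) u t) *\<^sub>R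
        cross3 (dX_u nu (edge_param a b) u t) (dX_t nu (edge_param a b) u t) = n"
      unfolding J cross3_dX_edge_param[OF v] n_def w_def by simp
  qed
  ultimately show ?thesis by blast
qed

lemma Jface_affine:
  assumes v: "vertically_mapped nu" and Jpos: "\<And>r s. (r, s) \<in> refT \<Longrightarrow> Jac nu r s 0 > 0"
    and a: "a \<in> refT_vertices" and b: "b \<in> refT_vertices"
  shows "\<exists>\<alpha> \<beta>. \<forall>u\<in>{0..1}. \<forall>t\<in>{0..1}. Jface nu (edge_param a b) u t = \<alpha> + \<beta> * u"
proof -
  let ?c = "sgn (base_det nu) * edge_length nu a b"
  have "Jface nu (edge_param a b) u t = ?c * vertical_extent nu (fst a) (snd a)
      + ?c * (vertical_extent nu (fst b) (snd b) - vertical_extent nu (fst a) (snd a)) * u"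
    if "u \<in> {0..1}" for u t
  proof -
    have "Jface nu (edge_param a b) u t
        = ?c * vertical_extent nu (fst (edge_param a b u)) (snd (edge_param a b u))"
      using Jface_edge_param_signed[OF v Jpos a b that, of t] by (simp only: mult_ac)
    then show ?thesis unfolding vertical_extent_edge_param by (simp add: algebra_simps)
  qed
  then show ?thesis by blast
qed

section \<open>Mass matrices\<close>

lemma det_mass_1D_nonzero:
  assumes gll: "gll_points N tp"
  shows "det (mass_1D N tp) \<noteq> 0"
proof -
  have "mass_1D N tp = mat (N+1) (N+1)
      (\<lambda>(i,j). integral {0..1} (\<lambda>y. lagrange1D N tp i y * lagrange1D N tp j y * (\<lambda>_. 1::real) y))"
    unfolding mass_1D_def by simp
  also have "det \<dots> \<noteq> 0"
    using gll_points_in_unit_interval[OF gll] lagrange1D_nodal[OF gll]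
    by (intro det_weighted_gram_nonzero[where x = tp] compact_Icc convex_real_interval
        continuous_on_lagrange1D continuous_on_const) auto
  finally show ?thesis .
qed

lemma det_mass_tri_nonzero:
  assumes v: "vertically_mapped nu"
    and Jpos: "\<And>r s. (r, s) \<in> refT \<Longrightarrow> Jac nu r s 0 > 0"
    and pts_in: "\<And>i. i < K \<Longrightarrow> pts i \<in> refT"
    and lag: "lagrange_tri N K pts ltri"
  shows "det (mass_tri nu K ltri) \<noteq> 0"
proof -
  have "mass_tri nu K ltri = mat K K (\<lambda>(i,j). integral refT (\<lambda>y. (\<lambda>i y. ltri i (fst y) (snd y)) i y
      * (\<lambda>i y. ltri i (fst y) (snd y)) j y * (\<lambda>y. Jac nu (fst y) (snd y) 0) y))"
    unfolding mass_tri_def by (simp add: case_prod_unfold)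
  also have "det \<dots> \<noteq> 0"
  proof (rule det_weighted_gram_nonzero[where x = pts])
    show "compact refT" "convex refT" "interior refT \<noteq> {}"
      by (rule compact_refT, rule convex_refT, rule interior_refT_nonempty)
    show "\<And>i. i < K \<Longrightarrow> continuous_on refT (\<lambda>y. ltri i (fst y) (snd y))"
      using lag unfolding lagrange_tri_def by (auto intro: continuous_on_poly2_deg)
    show "continuous_on refT (\<lambda>y. Jac nu (fst y) (snd y) 0)"
      unfolding Jac_vertically_mapped[OF v] vertical_extent_def by (intro continuous_intros)
    show "\<And>y. y \<in> refT \<Longrightarrow> 0 < Jac nu (fst y) (snd y) 0" using Jpos by auto
    show "\<And>i j. i < K \<Longrightarrow> j < K \<Longrightarrow> ltri i (fst (pts j)) (snd (pts j)) = (if i = j then 1 else 0)"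
      using lag unfolding lagrange_tri_def by auto
  qed (rule pts_in)
  finally show ?thesis .
qed

lemma mass_wedge_kron:
  assumes v: "vertically_mapped nu" and lag: "lagrange_tri N K pts ltri"
  shows "mass_wedge nu N K tp ltri = kron (mass_tri nu K ltri) (mass_1D N tp)"
proof (rule eq_matI)
  show "dim_row (mass_wedge nu N K tp ltri) = dim_row (kron (mass_tri nu K ltri) (mass_1D N tp))"
    "dim_col (mass_wedge nu N K tp ltri) = dim_col (kron (mass_tri nu K ltri) (mass_1D N tp))"
    by (simp_all add: mass_wedge_def kron_def mass_tri_def mass_1D_def)
  fix p q assume "p < dim_row (kron (mass_tri nu K ltri) (mass_1D N tp))"
      "q < dim_col (kron (mass_tri nu K ltri) (mass_1D N tp))"
  then have p: "p < K * (N+1)" and q: "q < K * (N+1)" by (simp_all add: kron_def mass_tri_def mass_1D_def)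
  define i where "i = p div (N+1)"
  define i' where "i' = q div (N+1)"
  define j where "j = p mod (N+1)"
  define j' where "j' = q mod (N+1)"
  have id: "i < K" "i' < K"
    using p q unfolding i_def i'_def by (simp_all add: less_mult_imp_div_less)
  have ci: "\<And>i. i < K \<Longrightarrow> continuous_on refT (\<lambda>y. ltri i (fst y) (snd y))"
    using lag unfolding lagrange_tri_def by (auto intro: continuous_on_poly2_deg)
  have cF: "continuous_on refT (\<lambda>(r,s). ltri i r s * ltri i' r s * Jac nu r s 0)"
    unfolding case_prod_unfold Jac_vertically_mapped[OF v] vertical_extent_def
    by (intro continuous_intros ci id)
  have cG: "continuous_on {0..1} (\<lambda>t. lagrange1D N tp j t * lagrange1D N tp j' t)"
    by (intro continuous_intros continuous_on_lagrange1D)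
  have "mass_wedge nu N K tp ltri $$ (p,q) = integral (refT \<times> {0..1})
      (\<lambda>(x,t). (\<lambda>(r,s). ltri i r s * ltri i' r s * Jac nu r s 0) x
        * (lagrange1D N tp j t * lagrange1D N tp j' t))"
    unfolding mass_wedge_def refW_def using p q
    by (simp add: lwedge_def Jac_vertically_mapped[OF v] i_def i'_def j_def j'_def case_prod_unfold mult_ac)
  also have "\<dots> = integral refT (\<lambda>(r,s). ltri i r s * ltri i' r s * Jac nu r s 0)
      * integral {0..1} (\<lambda>t. lagrange1D N tp j t * lagrange1D N tp j' t)"
    by (rule integral_Times_separable[OF compact_refT compact_Icc cF cG])
  also have "\<dots> = kron (mass_tri nu K ltri) (mass_1D N tp) $$ (p,q)"
    using p q id by (simp add: kron_def mass_tri_def mass_1D_def i_def i'_def j_def j'_def)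
  finally show "mass_wedge nu N K tp ltri $$ (p,q) = kron (mass_tri nu K ltri) (mass_1D N tp) $$ (p,q)" .
qed

lemma mass_face_kron:
  assumes v: "vertically_mapped nu"
  shows "mass_face nu (edge_param a b) N K tp ltri = kron (mass_edge nu (edge_param a b) K ltri) (mass_1D N tp)"
proof (rule eq_matI)
  let ?g = "edge_param a b"
  show "dim_row (mass_face nu ?g N K tp ltri) = dim_row (kron (mass_edge nu ?g K ltri) (mass_1D N tp))"
    "dim_col (mass_face nu ?g N K tp ltri) = dim_col (kron (mass_edge nu ?g K ltri) (mass_1D N tp))"
    by (simp_all add: mass_face_def kron_def mass_edge_def mass_1D_def)
  fix p q assume "p < dim_row (kron (mass_edge nu ?g K ltri) (mass_1D N tp))"
      "q < dim_col (kron (mass_edge nu ?g K ltri) (mass_1D N tp))"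
  then have p: "p < K * (N+1)" and q: "q < K * (N+1)" by (simp_all add: kron_def mass_edge_def mass_1D_def)
  define i where "i = p div (N+1)"
  define i' where "i' = q div (N+1)"
  define j where "j = p mod (N+1)"
  define j' where "j' = q mod (N+1)"
  have id: "i < K" "i' < K"
    using p q unfolding i_def i'_def by (simp_all add: less_mult_imp_div_less)
  define E where "E = integral {0..1}
    (\<lambda>u. ltri i (fst (?g u)) (snd (?g u)) * ltri i' (fst (?g u)) (snd (?g u)) * Jface nu ?g u 0)"
  have "mass_face nu ?g N K tp ltri $$ (p,q) = integral {0..1} (\<lambda>t. integral {0..1} (\<lambda>u.
      (lagrange1D N tp j t * lagrange1D N tp j' t) *
      (ltri i (fst (?g u)) (snd (?g u)) * ltri i' (fst (?g u)) (snd (?g u)) * Jface nu ?g u 0)))"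
    unfolding mass_face_def using p q
    by (simp add: lwedge_def i_def i'_def j_def j'_def mult_ac Jface_edge_param[OF v])
  also have "\<dots> = E * integral {0..1} (\<lambda>t. lagrange1D N tp j t * lagrange1D N tp j' t)"
    unfolding E_def integral_mult_right by (simp add: mult.commute)
  also have "\<dots> = kron (mass_edge nu ?g K ltri) (mass_1D N tp) $$ (p,q)"
    using p q id by (simp add: kron_def mass_edge_def mass_1D_def E_def i_def i'_def j_def j'_def)
  finally show "mass_face nu ?g N K tp ltri $$ (p,q) = kron (mass_edge nu ?g K ltri) (mass_1D N tp) $$ (p,q)" .
qed

theorem mainTheorem4:
  fixes nu :: "nat \<Rightarrow> real^3" and N K :: nat and pts :: "nat \<Rightarrow> real \<times> real"
    and ltri :: "nat \<Rightarrow> real \<Rightarrow> real \<Rightarrow> real" and tp :: "nat \<Rightarrow> real"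
    and a b :: "real \<times> real"
  assumes vert: "vertically_mapped nu"
    and Jpos: "\<And>r s t. ((r, s), t) \<in> refW \<Longrightarrow> Jac nu r s t > 0"
    and N: "N \<ge> 1"
    and K: "K = (N + 1) * (N + 2) div 2"
    and pts_in: "\<And>i. i < K \<Longrightarrow> pts i \<in> refT"
    and unisolv: "unisolvent N K pts"
    and lag: "lagrange_tri N K pts ltri"
    and gll: "gll_points N tp"
    and a: "a \<in> refT_vertices" and b: "b \<in> refT_vertices" and ab: "a \<noteq> b"
  shows
    "(\<exists>n :: real^3. \<exists>c. norm n = 1 \<and>
        (\<forall>u\<in>{0..1}. \<forall>t\<in>{0..1}. n \<bullet> faceX nu (edge_param a b) u t = c \<and>
           Jface nu (edge_param a b) u t > 0 \<and>
           (1 / Jface nu (edge_param a b) u t) *\<^sub>R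
              cross3 (dX_u nu (edge_param a b) u t) (dX_t nu (edge_param a b) u t) = n))
   \<and> (\<exists>\<alpha> \<beta>. \<forall>u\<in>{0..1}. \<forall>t\<in>{0..1}. Jface nu (edge_param a b) u t = \<alpha> + \<beta> * u)
   \<and> mass_face nu (edge_param a b) N K tp ltri
       = kron (mass_edge nu (edge_param a b) K ltri) (mass_1D N tp)
   \<and> (\<exists>Minv Mtriinv. mat_inverse (mass_wedge nu N K tp ltri) = Some Minv
        \<and> mat_inverse (mass_tri nu K ltri) = Some Mtriinv
        \<and> Minv * mass_face nu (edge_param a b) N K tp ltri
            = kron (Mtriinv * mass_edge nu (edge_param a b) K ltri) (1\<^sub>m (N + 1))
        \<and> (\<forall>p < K * (N + 1). \<forall>q < K * (N + 1). p mod (N + 1) \<noteq> q mod (N + 1) \<longrightarrow>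
             (Minv * mass_face nu (edge_param a b) N K tp ltri) $$ (p, q) = 0))"
proof -
  have Jpos0: "Jac nu r s 0 > 0" if "(r, s) \<in> refT" for r s
    using Jpos that unfolding refW_def by auto
  let ?T = "mass_tri nu K ltri" and ?M1 = "mass_1D N tp" and ?E = "mass_edge nu (edge_param a b) K ltri"
  have T: "?T \<in> carrier_mat K K" and M1: "?M1 \<in> carrier_mat (N+1) (N+1)" and E: "?E \<in> carrier_mat K K"
    unfolding mass_tri_def mass_1D_def mass_edge_def by simp_all
  obtain Tinv where Ti: "mat_inverse ?T = Some Tinv"
    using mat_inverse_exists_if_det_nonzero[OF T det_mass_tri_nonzero[OF vert Jpos0 pts_in lag]] .
  obtain M1inv where M1i: "mat_inverse ?M1 = Some M1inv"
    using mat_inverse_exists_if_det_nonzero[OF M1 det_mass_1D_nonzero[OF gll]] .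
  have Tinv: "Tinv \<in> carrier_mat K K" and M1inv: "M1inv * ?M1 = 1\<^sub>m (N+1)" "M1inv \<in> carrier_mat (N+1) (N+1)"
    using mat_inverse(2)[OF T Ti] mat_inverse(2)[OF M1 M1i] by auto
  have Mi: "mat_inverse (mass_wedge nu N K tp ltri) = Some (kron Tinv M1inv)"
    unfolding mass_wedge_kron[OF vert lag] by (rule mat_inverse_kron[OF T M1 _ Ti M1i]) simp
  have lift: "kron Tinv M1inv * mass_face nu (edge_param a b) N K tp ltri = kron (Tinv * ?E) (1\<^sub>m (N + 1))"
    using kron_mult[OF Tinv M1inv(2) E M1] M1inv(1) by (simp add: mass_face_kron[OF vert])
  have "dim_row (Tinv * ?E) = K" "dim_col (Tinv * ?E) = K" using Tinv E by auto
  then have "\<forall>p < K * (N + 1). \<forall>q < K * (N + 1). p mod (N + 1) \<noteq> q mod (N + 1) \<longrightarrow>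
      kron (Tinv * ?E) (1\<^sub>m (N + 1)) $$ (p, q) = 0"
    using kron_one_right_off_block[of _ "Tinv * ?E" "N + 1"] by simp
  moreover note face_planar[OF vert Jpos0 a b ab] Jface_affine[OF vert Jpos0 a b]
    mass_face_kron[OF vert, of a b N K tp ltri]
  ultimately show ?thesis using Mi Ti lift by auto
qed

end
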